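(* Let $\epsilon>0$, let $\mathbf{w}\in\mathbb{R}^d$ be non-increasing, and let $1\le k\le d-1$ with $\mathbf{w}^k_{max}>\mathbf{w}^k_{min}$. The additive mechanism with parameters $(\epsilon,\mathbf{w},k)$ satisfies $\epsilon$-local differential privacy: for all scored votes $v,v'\in\mathbb{D}_v$ and every $S\in\mathcal{C}^k$, $\Pr[S\mid v]\le e^\epsilon\Pr[S\mid v']$.
   Context: Candidates are $C_1,\dots,C_d$; a vote is a linear ordering; with non-increasing score vector $\mathbf{w}$ the scored vote $v$ assigns score $w_j$ to the candidate at rank $j$; $\mathbb{D}_v$ is the set of permutations of $\mathbf{w}$. Let $\mathcal{C}^k$ be the set of $k$-element subsets of $\{C_1,\dots,C_d\}$, $\mathbf{w}^k_{max}=\sum_{j=1}^kw_j$, $\mathbf{w}^k_{min}=\sum_{j=d-k+1}^dw_j$, $W=\sum_{j=1}^dw_j$. The additive mechanism on input $v$ outputs $S\in\mathcal{C}^k$ with probability $$\Pr[S\mid v]=\frac{\sum_{C_{j'}\in S}v_{j'}-\mathbf{w}^k_{min}}{\mathbf{w}^k_{max}-\mathbf{w}^k_{min}}\cdot\frac{e^\epsilon-1}{\Phi}+\frac1\Phi,\qquad \Phi=\binom dk\frac{\frac kd(e^\epsilon-1)W-e^\epsilon\mathbf{w}^k_{min}+\mathbf{w}^k_{max}}{\mathbf{w}^k_{max}-\mathbf{w}^k_{min}},$$ and releases the private view $\tilde v_j=a_k\cdot[C_j\in S]-b_k$ ($j=1,\dots,d$) for constants $a_k,b_k$ depending only on $\epsilon,\mathbf{w},k,d$.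 *)

theory Defs
  imports Complex_Main "HOL-Combinatorics.Permutations"
begin

text \<open>A score vector is w :: nat => real with
  w j the score of rank j (1 <= j <= d). A scored vote v assigns v j to candidate C_j;
  the set D_v of scored votes is the set of permutations of w.\<close>

definition scored_votes :: "nat \<Rightarrow> (nat \<Rightarrow> real) \<Rightarrow> (nat \<Rightarrow> real) set" where
  "scored_votes d w = {v. \<exists>\<sigma>. \<sigma> permutes {1..d} \<and> (\<forall>j\<in>{1..d}. v j = w (\<sigma> j))}"

definition k_subsets :: "nat \<Rightarrow> nat \<Rightarrow> nat set set" where
  "k_subsets d k = {S. S \<subseteq> {1..d} \<and> card S = k}"

definition wmax :: "nat \<Rightarrow> (nat \<Rightarrow> real) \<Rightarrow> real" where
  "wmax k w = (\<Sum>j=1..k. w j)"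

definition wmin :: "nat \<Rightarrow> nat \<Rightarrow> (nat \<Rightarrow> real) \<Rightarrow> real" where
  "wmin d k w = (\<Sum>j=d-k+1..d. w j)"

definition Wtot :: "nat \<Rightarrow> (nat \<Rightarrow> real) \<Rightarrow> real" where
  "Wtot d w = (\<Sum>j=1..d. w j)"

definition Phi :: "real \<Rightarrow> nat \<Rightarrow> nat \<Rightarrow> (nat \<Rightarrow> real) \<Rightarrow> real" where
  "Phi \<epsilon> d k w = real (d choose k) *
     ((real k / real d) * (exp \<epsilon> - 1) * Wtot d w - exp \<epsilon> * wmin d k w + wmax k w)
     / (wmax k w - wmin d k w)"

definition additive_prob :: "real \<Rightarrow> nat \<Rightarrow> nat \<Rightarrow> (nat \<Rightarrow> real) \<Rightarrow> (nat \<Rightarrow> real) \<Rightarrow> nat set \<Rightarrow> real" where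
  "additive_prob \<epsilon> d k w v S =
     ((\<Sum>j\<in>S. v j) - wmin d k w) / (wmax k w - wmin d k w) * (exp \<epsilon> - 1) / Phi \<epsilon> d k w
     + 1 / Phi \<epsilon> d k w"

end

theory Submission
  imports Defs
begin

text \<open>A scored vote is a permutation of \<open>w\<close>, so the total score it gives to a \<open>k\<close>-set of
  candidates is the sum of \<open>w\<close> over some \<open>k\<close>-set of ranks; as \<open>w\<close> is non-increasing, this lies
  between \<open>wmin d k w\<close> and \<open>wmax k w\<close>. Hence the output probability is \<open>(1 + (e\<^sup>\<epsilon> - 1) x) / \<Phi>\<close>
  with \<open>x \<in> [0, 1]\<close>, and any two such values differ by a factor of at most \<open>e\<^sup>\<epsilon>\<close>.
  It remains to check \<open>\<Phi> > 0\<close>: the \<open>k\<close> lowest scores average at most the overall average,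
  i.e. \<open>d \<cdot> wmin d k w \<le> k \<cdot> W\<close>.\<close>

lemma sum_le_sum_card_eq_separated:
  fixes f :: "'a \<Rightarrow> 'b::linordered_semidom"
  assumes "finite A" "finite B" "card A = card B" "\<And>a b. a \<in> A \<Longrightarrow> b \<in> B \<Longrightarrow> f a \<le> f b"
  shows "sum f A \<le> sum f B"
proof (cases "A = {}")
  case True
  then show ?thesis using assms by simp
next
  case False
  define c where "c = Max (f ` A)"
  have "sum f A \<le> of_nat (card A) * c"
    using assms(1) by (intro sum_bounded_above) (simp add: c_def)
  also have "\<dots> = of_nat (card B) * c" using assms(3) by simp
  also have "\<dots> \<le> sum f B"
    using assms False by (intro sum_bounded_below) (simp add: c_def Max_le_iff)
  finally show ?thesis .
qed

lemma sum_le_sum_exchange: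
  fixes f :: "'a \<Rightarrow> 'b::linordered_semidom"
  assumes "finite T" "finite U" "card T = card U"
    and "\<And>a b. a \<in> T - U \<Longrightarrow> b \<in> U - T \<Longrightarrow> f a \<le> f b"
  shows "sum f T \<le> sum f U"
proof -
  have "card (T - U) = card (U - T)"
    using assms(1-3) by (simp add: card_Diff_subset_Int Int_commute)
  then have "sum f (T - U) \<le> sum f (U - T)"
    using assms by (intro sum_le_sum_card_eq_separated) auto
  then show ?thesis
    using sum.Int_Diff[OF assms(1), of f U] sum.Int_Diff[OF assms(2), of f T]
    by (simp add: Int_commute add_left_mono)
qed

lemma sum_scored_vote_reindex:
  assumes "v \<in> scored_votes d w" "S \<subseteq> {1..d}"
  obtains \<sigma> where "\<sigma> permutes {1..d}" "sum v S = sum w (\<sigma> ` S)"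
proof -
  obtain \<sigma> where \<sigma>: "\<sigma> permutes {1..d}" "\<forall>j\<in>{1..d}. v j = w (\<sigma> j)"
    using assms(1) unfolding scored_votes_def by auto
  have "sum v S = (\<Sum>j\<in>S. w (\<sigma> j))" using \<sigma>(2) assms(2) by (intro sum.cong) auto
  also have "\<dots> = sum w (\<sigma> ` S)"
    using \<sigma>(1) by (simp add: sum.reindex permutes_inj_on)
  finally show thesis using that \<sigma>(1) by blast
qed

definition normalized_score :: "nat \<Rightarrow> nat \<Rightarrow> (nat \<Rightarrow> real) \<Rightarrow> (nat \<Rightarrow> real) \<Rightarrow> nat set \<Rightarrow> real" where
  "normalized_score d k w v S = ((\<Sum>j\<in>S. v j) - wmin d k w) / (wmax k w - wmin d k w)"

lemma additive_prob_eq: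
  "additive_prob \<epsilon> d k w v S = (1 + (exp \<epsilon> - 1) * normalized_score d k w v S) / Phi \<epsilon> d k w"
  unfolding additive_prob_def normalized_score_def by (simp add: add_divide_distrib)

lemma affine_le_exp_mult:
  fixes e x y :: real
  assumes "1 \<le> e" "0 \<le> x" "x \<le> 1" "0 \<le> y"
  shows "1 + (e - 1) * x \<le> e * (1 + (e - 1) * y)"
proof -
  have "1 + (e - 1) * x \<le> e" using assms mult_left_le[of x "e - 1"] by simp
  also have "\<dots> \<le> e * (1 + (e - 1) * y)" using assms by simp
  finally show ?thesis .
qed

context
  fixes d :: nat and w :: "nat \<Rightarrow> real"
  assumes antimono: "\<And>i j. 1 \<le> i \<Longrightarrow> i \<le> j \<Longrightarrow> j \<le> d \<Longrightarrow> w j \<le> w i"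
begin

lemma sum_le_wmax:
  assumes "T \<subseteq> {1..d}" "card T = k" "k \<le> d"
  shows "sum w T \<le> wmax k w"
  unfolding wmax_def
proof (rule sum_le_sum_exchange)
  show "finite T" using assms(1) finite_subset by blast
  show "\<And>a b. a \<in> T - {1..k} \<Longrightarrow> b \<in> {1..k} - T \<Longrightarrow> w a \<le> w b"
    using assms by (auto intro!: antimono)
qed (use assms in simp_all)

lemma wmin_le_sum:
  assumes "T \<subseteq> {1..d}" "card T = k" "k \<le> d"
  shows "wmin d k w \<le> sum w T"
  unfolding wmin_def
proof (rule sum_le_sum_exchange)
  show "finite T" using assms(1) finite_subset by blast
  show "\<And>a b. a \<in> {d-k+1..d} - T \<Longrightarrow> b \<in> T - {d-k+1..d} \<Longrightarrow> w a \<le> w b"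
    using assms by (auto intro!: antimono)
qed (use assms in simp_all)

lemma wmin_average_le_Wtot_average:
  assumes "0 < k" "k \<le> d"
  shows "real d * wmin d k w \<le> real k * Wtot d w"
proof -
  define m where "m = d - k"
  have d_eq: "d = m + k" using assms m_def by simp
  define high where "high = (\<Sum>j=1..m. w j)"
  have Wtot_split: "Wtot d w = high + wmin d k w"
    unfolding Wtot_def wmin_def high_def d_eq
    by (subst sum.union_disjoint[symmetric]) (auto intro!: sum.cong)
  have "real m * w (m+1) = of_nat (card {1..m}) * w (m+1)" by simp
  also have "\<dots> \<le> high"
    unfolding high_def using d_eq assms(1) by (intro sum_bounded_below) (auto intro!: antimono)
  finally have high_ge: "real m * w (m+1) \<le> high" .
  have "wmin d k w \<le> of_nat (card {d-k+1..d}) * w (m+1)"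
    unfolding wmin_def using d_eq by (intro sum_bounded_above) (auto intro!: antimono)
  then have wmin_le: "wmin d k w \<le> real k * w (m+1)" using d_eq by simp
  have "real m * wmin d k w \<le> real k * (real m * w (m+1))"
    using mult_left_mono[OF wmin_le, of "real m"] by (simp add: algebra_simps)
  also have "\<dots> \<le> real k * high" using high_ge by (intro mult_left_mono) auto
  finally have "real m * wmin d k w \<le> real k * high" .
  then show ?thesis using Wtot_split d_eq by (simp add: algebra_simps)
qed

lemma scored_vote_sum_bounds:
  assumes "v \<in> scored_votes d w" "S \<in> k_subsets d k"
  shows "wmin d k w \<le> sum v S" "sum v S \<le> wmax k w"
proof -
  have S: "S \<subseteq> {1..d}" "card S = k" using assms(2) unfolding k_subsets_def by auto
  then have "k \<le> d" using card_mono[of "{1..d}" S] by simp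
  obtain \<sigma> where \<sigma>: "\<sigma> permutes {1..d}" "sum v S = sum w (\<sigma> ` S)"
    using sum_scored_vote_reindex[OF assms(1) S(1)] .
  have "\<sigma> ` S \<subseteq> {1..d}" "card (\<sigma> ` S) = k"
    using S \<sigma>(1) permutes_image[OF \<sigma>(1)] by (auto simp: card_image permutes_inj_on)
  then show "wmin d k w \<le> sum v S" "sum v S \<le> wmax k w"
    using \<sigma>(2) wmin_le_sum sum_le_wmax \<open>k \<le> d\<close> by simp_all
qed

lemma normalized_score_bounds:
  assumes "v \<in> scored_votes d w" "S \<in> k_subsets d k" "wmin d k w < wmax k w"
  shows "0 \<le> normalized_score d k w v S" "normalized_score d k w v S \<le> 1"
  using scored_vote_sum_bounds[OF assms(1,2)] assms(3)
  by (simp_all add: normalized_score_def divide_le_eq_1)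

lemma Phi_pos:
  assumes "0 \<le> \<epsilon>" "0 < k" "k \<le> d" "wmin d k w < wmax k w"
  shows "Phi \<epsilon> d k w > 0"
proof -
  have "wmin d k w \<le> real k / real d * Wtot d w"
    using wmin_average_le_Wtot_average[OF assms(2,3)] assms(2,3) by (simp add: field_simps)
  then have "(exp \<epsilon> - 1) * wmin d k w \<le> (exp \<epsilon> - 1) * (real k / real d * Wtot d w)"
    using assms(1) by (intro mult_left_mono) auto
  then have "real k / real d * (exp \<epsilon> - 1) * Wtot d w - exp \<epsilon> * wmin d k w + wmax k w > 0"
    using assms(4) by (simp add: algebra_simps)
  then show ?thesis unfolding Phi_def using assms(3,4) by simp
qed

end

theorem theorem6p2:
  fixes \<epsilon> :: real and d k :: nat and w :: "nat \<Rightarrow> real"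
  assumes "\<epsilon> > 0"
    and "\<And>i j. 1 \<le> i \<Longrightarrow> i \<le> j \<Longrightarrow> j \<le> d \<Longrightarrow> w j \<le> w i"
    and "1 \<le> k" and "k \<le> d - 1"
    and "wmax k w > wmin d k w"
  shows "\<forall>v\<in>scored_votes d w. \<forall>v'\<in>scored_votes d w. \<forall>S\<in>k_subsets d k.
           additive_prob \<epsilon> d k w v S \<le> exp \<epsilon> * additive_prob \<epsilon> d k w v' S"
proof (intro ballI)
  fix v v' S
  assume v: "v \<in> scored_votes d w" and v': "v' \<in> scored_votes d w" and S: "S \<in> k_subsets d k"
  have Phi: "Phi \<epsilon> d k w > 0" using Phi_pos[OF assms(2)] assms by simp
  have "1 + (exp \<epsilon> - 1) * normalized_score d k w v S
          \<le> exp \<epsilon> * (1 + (exp \<epsilon> - 1) * normalized_score d k w v' S)"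
    using assms(1) normalized_score_bounds[OF assms(2) v S assms(5)]
      normalized_score_bounds[OF assms(2) v' S assms(5)]
    by (intro affine_le_exp_mult) auto
  then show "additive_prob \<epsilon> d k w v S \<le> exp \<epsilon> * additive_prob \<epsilon> d k w v' S"
    using Phi by (simp add: additive_prob_eq divide_right_mono)
qed

end
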